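(* For every integer $n\ge1$, \[ (3n-1)\,x\,p_{n-1}(x)=2n\,q_n(x)+(2n-1)\,q_{n-1}(x), \] and for every integer $n\ge2$, \[ (3n-2)\,x\,q_{n-1}(x)=\tfrac23\bigl(n\,p_n(x)+(2n-1)\,p_{n-1}(x)+(n-1)\,p_{n-2}(x)\bigr). \]
   Context: Pochhammer symbol: $(a)_0=1$, $(a)_n=a(a+1)\cdots(a+n-1)$; for real $a$ and integer $n\ge0$, $\binom{n+a}{n}:=\frac{(a+1)_n}{n!}$. Define $p_n(x)=\sum_{k=0}^n\binom nk\binom{n+\frac k2}{n}(-1)^{n-k}x^k$ and $q_n(x)=\sum_{k=0}^n\binom nk\binom{n+\frac{k-1}2}{n}(-1)^{n-k}x^k$. *)

theory Defs
  imports Complex_Main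
begin

text \<open>Generalized binomial: binom(n+a, n) := (a+1)_n / n! for real a.\<close>
definition gbinom :: "nat \<Rightarrow> real \<Rightarrow> real" where
  "gbinom n a = pochhammer (a + 1) n / fact n"

definition p_poly :: "nat \<Rightarrow> real \<Rightarrow> real" where
  "p_poly n x = (\<Sum>k=0..n. real (n choose k) * gbinom n (real k / 2) * (-1) ^ (n - k) * x ^ k)"

definition q_poly :: "nat \<Rightarrow> real \<Rightarrow> real" where
  "q_poly n x = (\<Sum>k=0..n. real (n choose k) * gbinom n ((real k - 1) / 2) * (-1) ^ (n - k) * x ^ k)"

end

theory Submission
  imports Defs
begin

text \<open>Compare coefficients of \<open>x\<^sup>k\<close>. Up to the common factor
  \<open>\<pm>binom(n,k) gbinom(n, \<cdot>)\<close>, the relations \<open>(n+1) gbinom(n+1,a) = (a+1+n) gbinom(n,a)\<close>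
  and \<open>(a+1) gbinom(n,a+1) = (n+1) gbinom(n+1,a)\<close> together with the absorption identities
  for binomial coefficients turn each coefficient identity into an identity of rational
  functions in \<open>k\<close> and \<open>n\<close>; the constant terms cancel separately.\<close>

lemma gbinom_Suc: "gbinom (Suc n) a = gbinom n a * (a + 1 + real n) / real (Suc n)"
  unfolding gbinom_def by (simp add: pochhammer_rec' field_simps)

lemma gbinom_shift: "gbinom n (a + 1) * (a + 1) = gbinom (Suc n) a * real (Suc n)"
proof -
  have "(a + 1) * pochhammer (a + 2) n = pochhammer (a + 1) (Suc n)"
    by (simp add: pochhammer_rec add_ac)
  then show ?thesis
    unfolding gbinom_def fact_Suc by (simp add: field_simps del: of_nat_Suc)
qed

lemma gbinom_0_right: "gbinom n 0 = 1"
  by (simp add: gbinom_def pochhammer_fact[symmetric])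

lemma binomial_Suc_Suc_real:
  "real (Suc n choose Suc k) = real (Suc n) / real (Suc k) * real (n choose k)"
proof -
  have "real (Suc k) * real (Suc n choose Suc k) = real (Suc n) * real (n choose k)"
    by (metis Suc_times_binomial of_nat_mult)
  then show ?thesis by (simp add: field_simps del: of_nat_Suc)
qed

lemma binomial_Suc_right_real:
  "real (n choose Suc k) = (real n - real k) / real (Suc k) * real (n choose k)"
proof (cases "k < n")
  case True
  have "real (Suc k) * real (n choose Suc k) = real (n - k) * real (n choose k)"
    by (metis binomial_absorption binomial_absorb_comp of_nat_mult)
  with True show ?thesis by (simp add: field_simps of_nat_diff del: of_nat_Suc)
qed (auto simp: binomial_eq_0)

lemma binomial_pred_real:
  "real (n choose k) = (real (Suc n) - real k) / real (Suc n) * real (Suc n choose k)"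
proof (cases "k \<le> Suc n")
  case True
  have "real (Suc n - k) * real (Suc n choose k) = real (Suc n) * real (n choose k)"
    using binomial_absorb_comp[of "Suc n" k] by (metis diff_Suc_1 of_nat_mult)
  with True show ?thesis by (simp add: field_simps of_nat_diff del: of_nat_Suc)
qed (simp add: binomial_eq_0)

lemma gbinom_plus_one_eqs:
  fixes u :: real
  assumes "u > 0"
  shows "gbinom m u = gbinom (Suc m) (u - 1) * (real m + 1) / u"
    and "gbinom (Suc m) u = gbinom (Suc m) (u - 1) * (u + (real m + 1)) / u"
    and "gbinom (Suc (Suc m)) u
           = gbinom (Suc m) (u - 1) * (u + (real m + 1)) * (u + (real m + 2)) / ((real m + 2) * u)"
proof -
  define H where "H = gbinom (Suc m) (u - 1)"
  define M where "M = real m + 1"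
  define N where "N = real m + 2"
  have NM: "real (Suc (Suc m)) = N" "real (Suc m) = M"
    by (simp_all add: N_def M_def)
  have N0: "N > 0" by (simp add: N_def)
  have H_Suc: "gbinom (Suc (Suc m)) (u - 1) = H * (u + M) / N"
    unfolding H_def by (subst gbinom_Suc) (simp add: M_def N_def add_ac)
  have "gbinom m u * u = H * M"
    using gbinom_shift[of m "u - 1", unfolded NM] by (simp add: H_def)
  with assms show "gbinom m u = H * M / u"
    by (simp add: field_simps)
  have "gbinom (Suc m) u * u = H * (u + M)"
    using gbinom_shift[of "Suc m" "u - 1", unfolded NM] N0 by (simp add: H_Suc)
  with assms show "gbinom (Suc m) u = H * (u + M) / u"
    by (simp add: field_simps)
  have "gbinom (Suc (Suc m)) u * u = gbinom (Suc (Suc (Suc m))) (u - 1) * real (Suc (Suc (Suc m)))"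
    using gbinom_shift[of "Suc (Suc m)" "u - 1"] by simp
  also have "\<dots> = H * (u + M) * (u + N) / N"
    unfolding gbinom_Suc[of "Suc (Suc m)"] H_Suc by (simp del: of_nat_Suc add: NM N_def[symmetric])
  finally show "gbinom (Suc (Suc m)) u = H * (u + M) * (u + N) / (N * u)"
    using assms N0 by (simp add: field_simps)
qed

text \<open>The sign \<open>(-1)^(n+k)\<close> agrees with the \<open>(-1)^(n-k)\<close> of \<open>p_poly\<close>, \<open>q_poly\<close>
  for \<open>k \<le> n\<close> but avoids truncated subtraction, so coefficient identities hold for all \<open>k\<close>.\<close>

definition p_coeff :: "nat \<Rightarrow> nat \<Rightarrow> real" where
  "p_coeff n k = real (n choose k) * gbinom n (real k / 2) * (-1) ^ (n + k)"

definition q_coeff :: "nat \<Rightarrow> nat \<Rightarrow> real" where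
  "q_coeff n k = real (n choose k) * gbinom n ((real k - 1) / 2) * (-1) ^ (n + k)"

lemma q_coeff_recurrence_0:
  "2 * real (Suc m) * q_coeff (Suc m) 0 + (2 * real (Suc m) - 1) * q_coeff m 0 = 0"
  by (simp add: q_coeff_def gbinom_Suc field_simps)

lemma q_coeff_recurrence:
  "2 * real (Suc m) * q_coeff (Suc m) (Suc k) + (2 * real (Suc m) - 1) * q_coeff m (Suc k)
     = (3 * real (Suc m) - 1) * p_coeff m k"
proof -
  define G where "G = gbinom m (real k / 2)"
  define s where "s = (-1 :: real) ^ (m + k)"
  define c where "c = real (m choose k)"
  have q_Suc: "q_coeff (Suc m) (Suc k) = c * G * s * (real k + 2 * real m + 2) / (2 * real (Suc k))"
    by (simp add: q_coeff_def gbinom_Suc binomial_Suc_Suc_real c_def G_def s_def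
             del: binomial_Suc_Suc of_nat_Suc) (simp add: divide_simps)
  have q: "q_coeff m (Suc k) = - (c * G * s * (real m - real k) / real (Suc k))"
    by (simp add: q_coeff_def binomial_Suc_right_real c_def G_def s_def)
  have p: "p_coeff m k = c * G * s"
    by (simp add: p_coeff_def c_def G_def s_def)
  show ?thesis
    unfolding q_Suc q p by (simp add: field_simps del: of_nat_Suc) (simp add: algebra_simps)
qed

lemma p_coeff_recurrence_0:
  "real (Suc (Suc m)) * p_coeff (Suc (Suc m)) 0 + (2 * real (Suc (Suc m)) - 1) * p_coeff (Suc m) 0
     + (real (Suc (Suc m)) - 1) * p_coeff m 0 = 0"
  by (simp add: p_coeff_def gbinom_0_right algebra_simps)

lemma p_coeff_recurrence:
  "real (Suc (Suc m)) * p_coeff (Suc (Suc m)) (Suc k) + (2 * real (Suc (Suc m)) - 1) * p_coeff (Suc m) (Suc k)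
     + (real (Suc (Suc m)) - 1) * p_coeff m (Suc k)
   = 3 / 2 * ((3 * real (Suc (Suc m)) - 2) * q_coeff (Suc m) k)"
proof -
  \<comment> \<open>\<open>u\<close>, \<open>M\<close>, \<open>N\<close> stay atomic so that \<open>field_simps\<close> keeps denominators as products
    of these (provably nonzero) variables instead of expanding them into sums.\<close>
  define u where "u = (real k + 1) / 2"
  define M where "M = real m + 1"
  define N where "N = real m + 2"
  have u0: "u > 0" and M0: "M > 0" and N0: "N > 0"
    by (simp_all add: u_def M_def N_def)
  have half: "real (Suc k) / 2 = u" and k: "real (Suc k) = 2 * u" and q_arg: "(real k - 1) / 2 = u - 1"
    by (simp_all add: u_def field_simps)
  have NM: "real (Suc (Suc m)) = N" "real (Suc m) = M"
    by (simp_all add: N_def M_def)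
  define H where "H = gbinom (Suc m) (u - 1)"
  define s where "s = (-1 :: real) ^ (m + k)"
  define c where "c = real (Suc m choose k)"
  note gbinom_eqs = gbinom_plus_one_eqs[OF u0, of m, folded M_def N_def H_def]
  have bSS: "real (Suc (Suc m) choose Suc k) = N * c / (2 * u)"
    by (simp only: binomial_Suc_Suc_real c_def NM) (simp add: u_def field_simps)
  have bS: "real (Suc m choose Suc k) = (M + 1 - 2 * u) * c / (2 * u)"
    by (simp only: binomial_Suc_right_real c_def NM) (simp add: u_def M_def field_simps)
  have b: "real (m choose Suc k) = (M - 2 * u) * (M + 1 - 2 * u) * c / (2 * u * M)"
    using u0 M0 by (simp only: binomial_pred_real[of m] bS NM k) (simp add: field_simps)
  show ?thesis
    unfolding p_coeff_def q_coeff_def half q_arg gbinom_eqs bSS bS b NM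
    using u0 M0 N0
    by (simp add: field_simps s_def[symmetric] c_def[symmetric] H_def[symmetric])
      (simp add: N_def M_def algebra_simps)
qed

lemma minus_one_power_diff: "k \<le> n \<Longrightarrow> (-1 :: 'a :: ring_1) ^ (n - k) = (-1) ^ (n + k)"
proof -
  assume "k \<le> n"
  then have "n + k = (n - k) + 2 * k" by simp
  then have "(-1 :: 'a) ^ (n + k) = (-1) ^ (n - k) * ((-1) ^ 2) ^ k"
    by (simp only: power_add power_mult)
  then show ?thesis by simp
qed

lemma p_poly_eq_sum: "n \<le> N \<Longrightarrow> p_poly n x = (\<Sum>k\<le>N. p_coeff n k * x ^ k)"
proof -
  assume "n \<le> N"
  have "p_poly n x = (\<Sum>k\<le>n. p_coeff n k * x ^ k)"
    unfolding p_poly_def p_coeff_def atLeast0AtMost by (intro sum.cong) (auto simp: minus_one_power_diff)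
  also have "\<dots> = (\<Sum>k\<le>N. p_coeff n k * x ^ k)"
    using \<open>n \<le> N\<close> by (intro sum.mono_neutral_left) (auto simp: p_coeff_def)
  finally show ?thesis .
qed

lemma q_poly_eq_sum: "n \<le> N \<Longrightarrow> q_poly n x = (\<Sum>k\<le>N. q_coeff n k * x ^ k)"
proof -
  assume "n \<le> N"
  have "q_poly n x = (\<Sum>k\<le>n. q_coeff n k * x ^ k)"
    unfolding q_poly_def q_coeff_def atLeast0AtMost by (intro sum.cong) (auto simp: minus_one_power_diff)
  also have "\<dots> = (\<Sum>k\<le>N. q_coeff n k * x ^ k)"
    using \<open>n \<le> N\<close> by (intro sum.mono_neutral_left) (auto simp: q_coeff_def)
  finally show ?thesis .
qed

lemma sum_power_shift:
  fixes f :: "nat \<Rightarrow> 'a :: comm_semiring_1"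
  assumes "f 0 = 0"
  shows "(\<Sum>k\<le>Suc N. f k * x ^ k) = x * (\<Sum>k\<le>N. f (Suc k) * x ^ k)"
  by (simp add: sum.atMost_Suc_shift assms sum_distrib_left mult_ac del: sum.atMost_Suc)

lemma x_p_poly_recurrence:
  "(3 * real (Suc m) - 1) * x * p_poly m x
     = 2 * real (Suc m) * q_poly (Suc m) x + (2 * real (Suc m) - 1) * q_poly m x"
proof -
  define c where "c k = 2 * real (Suc m) * q_coeff (Suc m) k + (2 * real (Suc m) - 1) * q_coeff m k" for k
  have "2 * real (Suc m) * q_poly (Suc m) x + (2 * real (Suc m) - 1) * q_poly m x
      = (\<Sum>k\<le>Suc m. c k * x ^ k)"
    by (simp add: q_poly_eq_sum[of _ "Suc m"] c_def sum_distrib_left sum.distrib algebra_simps)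
  also have "\<dots> = x * (\<Sum>k\<le>m. c (Suc k) * x ^ k)"
    by (rule sum_power_shift) (unfold c_def, rule q_coeff_recurrence_0)
  also have "\<dots> = (3 * real (Suc m) - 1) * x * p_poly m x"
    unfolding c_def q_coeff_recurrence by (simp add: p_poly_eq_sum[of m m] sum_distrib_left mult_ac)
  finally show ?thesis ..
qed

lemma x_q_poly_recurrence:
  "(3 * real (Suc (Suc m)) - 2) * x * q_poly (Suc m) x
     = 2 / 3 * (real (Suc (Suc m)) * p_poly (Suc (Suc m)) x
                + (2 * real (Suc (Suc m)) - 1) * p_poly (Suc m) x + (real (Suc (Suc m)) - 1) * p_poly m x)"
proof -
  define c where "c k = real (Suc (Suc m)) * p_coeff (Suc (Suc m)) k
    + (2 * real (Suc (Suc m)) - 1) * p_coeff (Suc m) k + (real (Suc (Suc m)) - 1) * p_coeff m k" for k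
  have "real (Suc (Suc m)) * p_poly (Suc (Suc m)) x
          + (2 * real (Suc (Suc m)) - 1) * p_poly (Suc m) x + (real (Suc (Suc m)) - 1) * p_poly m x
      = (\<Sum>k\<le>Suc (Suc m). c k * x ^ k)"
    by (simp add: p_poly_eq_sum[of _ "Suc (Suc m)"] c_def sum_distrib_left sum.distrib algebra_simps)
  also have "\<dots> = x * (\<Sum>k\<le>Suc m. c (Suc k) * x ^ k)"
    by (rule sum_power_shift) (unfold c_def, rule p_coeff_recurrence_0)
  also have "\<dots> = 3 / 2 * ((3 * real (Suc (Suc m)) - 2) * x * q_poly (Suc m) x)"
    unfolding c_def p_coeff_recurrence
    by (simp add: q_poly_eq_sum[of "Suc m" "Suc m"] sum_distrib_left mult_ac del: sum.atMost_Suc)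
  finally show ?thesis by simp
qed

theorem mainTheorem8:
  fixes x :: real
  shows "(\<forall>n::nat. n \<ge> 1 \<longrightarrow>
            (3 * real n - 1) * x * p_poly (n - 1) x
              = 2 * real n * q_poly n x + (2 * real n - 1) * q_poly (n - 1) x)
       \<and> (\<forall>n::nat. n \<ge> 2 \<longrightarrow>
            (3 * real n - 2) * x * q_poly (n - 1) x
              = 2 / 3 * (real n * p_poly n x + (2 * real n - 1) * p_poly (n - 1) x
                         + (real n - 1) * p_poly (n - 2) x))"
proof (intro conjI allI impI)
  fix n :: nat
  assume "n \<ge> 1"
  then obtain m where "n = Suc m" by (cases n) auto
  then show "(3 * real n - 1) * x * p_poly (n - 1) x
      = 2 * real n * q_poly n x + (2 * real n - 1) * q_poly (n - 1) x"
    using x_p_poly_recurrence[of m x] by (simp del: of_nat_Suc)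
next
  fix n :: nat
  assume "n \<ge> 2"
  then obtain m where "n = Suc (Suc m)" by (metis add_2_eq_Suc le_Suc_ex)
  then show "(3 * real n - 2) * x * q_poly (n - 1) x
      = 2 / 3 * (real n * p_poly n x + (2 * real n - 1) * p_poly (n - 1) x
                 + (real n - 1) * p_poly (n - 2) x)"
    using x_q_poly_recurrence[of m x] by (simp del: of_nat_Suc)
qed

end
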